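(* Let $g$ be a nondegenerate symmetric bilinear form on $\mathbb{R}^n$, let $A$ be a $g$-symmetric endomorphism of $\mathbb{R}^n$ and let $\lambda$ be a real eigenvalue of $A$. Then $\big|\sigma\big(g|_{\mathrm{Ker}(A-\lambda)^n}\big)\big|\le\dim\mathrm{Ker}(A-\lambda)$. Moreover, the restriction of $g$ to the eigenspace $\mathrm{Ker}(A-\lambda)$ is nondegenerate if and only if the algebraic multiplicity $\dim\mathrm{Ker}(A-\lambda)^n$ and the geometric multiplicity $\dim\mathrm{Ker}(A-\lambda)$ of $\lambda$ coincide.
   Context: $g$ is not assumed positive definite; $A$ is $g$-symmetric if $g(Av,w)=g(v,Aw)$ for all $v,w$. For a subspace $W$, $g|_W$ is the restriction of $g$ to $W\times W$, and $\sigma$ of a symmetric bilinear form is its number of positive squares minus its number of negative squares. *)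

theory Defs
  imports "HOL-Analysis.Analysis"
begin

text \<open>Symmetric bilinear forms on R^n (here real^'n, n = CARD('n)).\<close>

definition sym_bilinear :: "('a::real_vector \<Rightarrow> 'a \<Rightarrow> real) \<Rightarrow> bool" where
  "sym_bilinear g \<longleftrightarrow> bilinear g \<and> (\<forall>v w. g v w = g w v)"

definition nondegenerate_on :: "('a::real_vector \<Rightarrow> 'a \<Rightarrow> real) \<Rightarrow> 'a set \<Rightarrow> bool" where
  "nondegenerate_on g W \<longleftrightarrow> (\<forall>w\<in>W. (\<forall>v\<in>W. g w v = 0) \<longrightarrow> w = 0)"

definition g_symmetric :: "('a::real_vector \<Rightarrow> 'a \<Rightarrow> real) \<Rightarrow> ('a \<Rightarrow> 'a) \<Rightarrow> bool" where
  "g_symmetric g A \<longleftrightarrow> (\<forall>v w. g (A v) w = g v (A w))"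

definition pos_index :: "('a::euclidean_space \<Rightarrow> 'a \<Rightarrow> real) \<Rightarrow> 'a set \<Rightarrow> nat" where
  "pos_index g W = Max {dim U | U. subspace U \<and> U \<subseteq> W \<and> (\<forall>u\<in>U. u \<noteq> 0 \<longrightarrow> g u u > 0)}"

definition neg_index :: "('a::euclidean_space \<Rightarrow> 'a \<Rightarrow> real) \<Rightarrow> 'a set \<Rightarrow> nat" where
  "neg_index g W = Max {dim U | U. subspace U \<and> U \<subseteq> W \<and> (\<forall>u\<in>U. u \<noteq> 0 \<longrightarrow> g u u < 0)}"

definition signature :: "('a::euclidean_space \<Rightarrow> 'a \<Rightarrow> real) \<Rightarrow> 'a set \<Rightarrow> int" where
  "signature g W = int (pos_index g W) - int (neg_index g W)"

definition gen_kernel :: "('a::real_vector \<Rightarrow> 'a) \<Rightarrow> real \<Rightarrow> nat \<Rightarrow> 'a set" where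
  "gen_kernel A c k = {v. ((\<lambda>x. A x - c *\<^sub>R x) ^^ k) v = 0}"

end

(* Write N = A - lam and E = Ker N^n. Since Ker N^(2n) = Ker N^n, the whole space is the sum of
   Im N^n and E (Fitting), and the two are g-orthogonal because N is g-symmetric; so g is
   nondegenerate on E, and the inductive diagonalisation behind Sylvester's law gives p + q >= dim E
   for the indices p, q of g on E.
   A maximal N-invariant isotropic subspace I of E satisfies N (E \<inter> I^perp) \<subseteq> I, whence
   dim E <= dim (E \<inter> I^perp) + dim I <= 2 dim I + dim Ker N. A definite subspace meets I only in 0,
   so p, q <= dim E - dim I, and |p - q| <= dim E - 2 dim I <= dim Ker N.
   If g is nondegenerate on Ker N and N^2 x = 0, then N x lies in Ker N and is g-orthogonal to it,
   since g (N x) z = g x (N z); hence N x = 0 and E = Ker N. Conversely E = Ker N inherits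
   nondegeneracy. *)

theory Submission
  imports Defs
begin

definition positive_definite_on :: "('a::real_vector \<Rightarrow> 'a \<Rightarrow> real) \<Rightarrow> 'a set \<Rightarrow> bool" where
  "positive_definite_on g U \<longleftrightarrow> (\<forall>u\<in>U. u \<noteq> 0 \<longrightarrow> 0 < g u u)"

definition isotropic :: "('a::real_vector \<Rightarrow> 'a \<Rightarrow> real) \<Rightarrow> 'a set \<Rightarrow> bool" where
  "isotropic g I \<longleftrightarrow> (\<forall>a\<in>I. \<forall>b\<in>I. g a b = 0)"

definition g_orth :: "('a::real_vector \<Rightarrow> 'a \<Rightarrow> real) \<Rightarrow> 'a set \<Rightarrow> 'a set" where
  "g_orth g X = {y. \<forall>x\<in>X. g y x = 0}"

lemma sym_bilinear_uminus: "sym_bilinear g \<Longrightarrow> sym_bilinear (\<lambda>x y. - g x y)"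
  unfolding sym_bilinear_def bilinear_def by (auto intro: linear_compose_neg)

lemma g_orth_uminus: "g_orth (\<lambda>x y. - g x y) X = g_orth g X"
  by (simp add: g_orth_def)

lemma g_orth_antimono: "X \<subseteq> Y \<Longrightarrow> g_orth g Y \<subseteq> g_orth g X"
  by (auto simp: g_orth_def)

lemma subspace_g_orth: "bilinear g \<Longrightarrow> subspace (g_orth g X)"
  unfolding g_orth_def subspace_def
  by (simp add: bilinear_lzero bilinear_ladd bilinear_lmul)

lemma g_orth_span:
  assumes "bilinear g"
  shows "g_orth g (span X) = g_orth g X"
proof
  show "g_orth g (span X) \<subseteq> g_orth g X"
    by (rule g_orth_antimono) (rule span_superset)
  show "g_orth g X \<subseteq> g_orth g (span X)"
  proof
    fix y assume "y \<in> g_orth g X"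
    then have "X \<subseteq> {x. g y x = 0}" by (auto simp: g_orth_def)
    moreover have "subspace {x. g y x = 0}"
      using assms by (simp add: bilinear_def linear_subspace_kernel)
    ultimately have "span X \<subseteq> {x. g y x = 0}" by (rule span_minimal)
    then show "y \<in> g_orth g (span X)" by (auto simp: g_orth_def)
  qed
qed

lemma isotropic_span:
  assumes "bilinear g" "isotropic g S"
  shows "isotropic g (span S)"
proof -
  have "S \<subseteq> g_orth g S" using assms(2) by (auto simp: isotropic_def g_orth_def)
  then have "span S \<subseteq> g_orth g S" by (rule span_minimal) (rule subspace_g_orth[OF assms(1)])
  then have "span S \<subseteq> g_orth g (span S)" by (simp add: g_orth_span[OF assms(1)])
  then show ?thesis by (auto simp: isotropic_def g_orth_def)
qed

section \<open>Dimension counting\<close>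

lemma dim_sums_eq_if_Int_zero:
  fixes U V :: "'a::euclidean_space set"
  assumes "subspace U" "subspace V" "U \<inter> V \<subseteq> {0}"
  shows "dim {x + y |x y. x \<in> U \<and> y \<in> V} = dim U + dim V"
proof -
  have "dim (U \<inter> V) = 0" using assms(3) by simp
  then show ?thesis using dim_sums_Int[OF assms(1,2)] by linarith
qed

lemma dim_add_le_if_Int_zero:
  fixes U V W :: "'a::euclidean_space set"
  assumes "subspace U" "subspace V" "subspace W" "U \<subseteq> W" "V \<subseteq> W" "U \<inter> V \<subseteq> {0}"
  shows "dim U + dim V \<le> dim W"
proof -
  have "dim U + dim V = dim {x + y |x y. x \<in> U \<and> y \<in> V}"
    using dim_sums_eq_if_Int_zero[OF assms(1,2,6)] by simp
  also have "\<dots> \<le> dim W"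
    by (rule dim_subset) (use assms(3-5) subspace_add in blast)
  finally show ?thesis .
qed

lemma dim_le_dim_image_add_dim_kernel:
  fixes f :: "'a::euclidean_space \<Rightarrow> 'b::euclidean_space"
  assumes "linear f" "subspace S"
  shows "dim S \<le> dim (f ` S) + dim (S \<inter> {x. f x = 0})"
proof -
  define K where "K = S \<inter> {x. f x = 0}"
  define T where "T = {y \<in> S. \<forall>x\<in>K. orthogonal x y}"
  have "subspace K" unfolding K_def using assms by (simp add: subspace_inter linear_subspace_kernel)
  then have dim_S: "dim T + dim K = dim S"
    unfolding T_def by (rule dim_subspace_orthogonal_to_vectors[OF _ assms(2)]) (auto simp: K_def)
  have sT: "subspace T"
    unfolding T_def using subspace_inter[OF assms(2) subspace_orthogonal_to_vectors]
    by (simp add: Int_def)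
  have "inj_on f T"
    unfolding linear_inj_on_iff_eq_0[OF assms(1) sT] by (force simp: T_def K_def orthogonal_self)
  moreover have "span T = T" using sT by (simp add: span_eq_iff)
  ultimately have "dim (f ` T) = dim T" by (intro dim_image_eq[OF assms(1)]) (simp only:)
  moreover have "dim (f ` T) \<le> dim (f ` S)" by (rule dim_subset) (auto simp: T_def)
  ultimately show ?thesis using dim_S unfolding K_def by linarith
qed

lemma dim_le_dim_Int_kernel_functional:
  fixes \<phi> :: "'a::euclidean_space \<Rightarrow> real"
  assumes "linear \<phi>" "subspace S"
  shows "dim S \<le> dim (S \<inter> {x. \<phi> x = 0}) + 1"
  using dim_le_dim_image_add_dim_kernel[OF assms] dim_subset_UNIV[of "\<phi> ` S"] by simp

lemma dim_le_dim_Int_g_orth: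
  fixes g :: "'a::euclidean_space \<Rightarrow> 'a \<Rightarrow> real"
  assumes "bilinear g" "subspace E"
  shows "dim E \<le> dim (E \<inter> g_orth g X) + dim X"
proof -
  have card_bound: "dim E \<le> dim (E \<inter> g_orth g B) + card B" if "finite B" for B
    using that
  proof (induction B rule: finite_induct)
    case empty
    then show ?case by (simp add: g_orth_def)
  next
    case (insert b B)
    have "linear (\<lambda>y. g y b)" using assms(1) by (simp add: bilinear_def)
    moreover have "subspace (E \<inter> g_orth g B)" by (intro subspace_inter assms subspace_g_orth)
    ultimately have "dim (E \<inter> g_orth g B) \<le> dim (E \<inter> g_orth g B \<inter> {y. g y b = 0}) + 1"
      by (rule dim_le_dim_Int_kernel_functional)
    moreover have "E \<inter> g_orth g B \<inter> {y. g y b = 0} = E \<inter> g_orth g (insert b B)"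
      by (auto simp: g_orth_def)
    ultimately show ?case using insert by simp
  qed
  obtain B where B: "independent B" "X \<subseteq> span B" "card B = dim X"
    using basis_exists by blast
  have "g_orth g B \<subseteq> g_orth g X"
    using g_orth_antimono[OF B(2), of g] by (simp add: g_orth_span[OF assms(1)])
  then have "dim (E \<inter> g_orth g B) \<le> dim (E \<inter> g_orth g X)" by (intro dim_subset) blast
  then show ?thesis using card_bound[OF finiteI_independent[OF B(1)]] B(3) by linarith
qed

section \<open>Sylvester's law of inertia\<close>

lemma finite_dims: "finite {dim U | U::'a::euclidean_space set. P U}"
  by (rule finite_subset[of _ "{..DIM('a)}"]) (auto simp: dim_subset_UNIV)

lemma dim_le_pos_index:
  fixes g :: "'a::euclidean_space \<Rightarrow> 'a \<Rightarrow> real"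
  assumes "subspace U" "U \<subseteq> W" "positive_definite_on g U"
  shows "dim U \<le> pos_index g W"
  unfolding pos_index_def
  by (rule Max_ge[OF finite_dims]) (use assms in \<open>auto simp: positive_definite_on_def\<close>)

lemma pos_index_attained:
  fixes g :: "'a::euclidean_space \<Rightarrow> 'a \<Rightarrow> real"
  assumes "subspace W"
  obtains U where "subspace U" "U \<subseteq> W" "positive_definite_on g U" "dim U = pos_index g W"
proof -
  let ?D = "{dim U | U. subspace U \<and> U \<subseteq> W \<and> (\<forall>u\<in>U. u \<noteq> 0 \<longrightarrow> 0 < g u u)}"
  have "dim {0::'a} \<in> ?D" using assms subspace_0 subspace_single_0 by blast
  then have "Max ?D \<in> ?D" using finite_dims by (intro Max_in) auto
  then show ?thesis using that unfolding pos_index_def positive_definite_on_def by auto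
qed

lemma neg_index_eq_pos_index_uminus: "neg_index g W = pos_index (\<lambda>x y. - g x y) W"
  unfolding neg_index_def pos_index_def by simp

lemma pos_index_add_dim_le:
  fixes g :: "'a::euclidean_space \<Rightarrow> 'a \<Rightarrow> real"
  assumes "subspace W" "subspace Q" "Q \<subseteq> W" "\<forall>u\<in>Q. g u u \<le> 0"
  shows "pos_index g W + dim Q \<le> dim W"
proof -
  obtain U where U: "subspace U" "U \<subseteq> W" "positive_definite_on g U" "dim U = pos_index g W"
    using pos_index_attained[OF assms(1)] .
  have "U \<inter> Q \<subseteq> {0}" using U(3) assms(4) by (force simp: positive_definite_on_def)
  with dim_add_le_if_Int_zero[OF U(1) assms(2) assms(1) U(2) assms(3)] U(4) show ?thesis by simp
qed

lemma nondegenerate_null_quadratic_form_trivial: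
  assumes "sym_bilinear g" "subspace E" "nondegenerate_on g E" "\<forall>x\<in>E. g x x = 0"
  shows "E \<subseteq> {0}"
proof
  have bl: "bilinear g" and sym: "\<And>v w. g v w = g w v"
    using assms(1) by (auto simp: sym_bilinear_def)
  fix w assume w: "w \<in> E"
  have "g w v = 0" if v: "v \<in> E" for v
  proof -
    have "g (w + v) (w + v) = 0" using assms(2,4) w v by (simp add: subspace_add)
    then show ?thesis
      using assms(4) w v sym[of v w] by (simp add: bilinear_ladd[OF bl] bilinear_radd[OF bl])
  qed
  then show "w \<in> {0}" using assms(3) w by (auto simp: nondegenerate_on_def)
qed

lemma nondegenerate_on_Int_g_orth_vector:
  assumes "sym_bilinear g" "subspace E" "nondegenerate_on g E" "x \<in> E" "g x x \<noteq> 0"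
  shows "nondegenerate_on g (E \<inter> g_orth g {x})"
  unfolding nondegenerate_on_def
proof (intro ballI impI)
  have bl: "bilinear g" and sym: "\<And>v w. g v w = g w v"
    using assms(1) by (auto simp: sym_bilinear_def)
  fix w assume w: "w \<in> E \<inter> g_orth g {x}" and w_perp: "\<forall>v\<in>E \<inter> g_orth g {x}. g w v = 0"
  have "g w v = 0" if v: "v \<in> E" for v
  proof -
    define c where "c = g v x / g x x"
    have "v - c *\<^sub>R x \<in> E \<inter> g_orth g {x}"
      using assms(2,4,5) v by (simp add: c_def g_orth_def subspace_diff subspace_scale
          bilinear_lsub[OF bl] bilinear_lmul[OF bl])
    then have "g w (v - c *\<^sub>R x) = 0" using w_perp by blast
    moreover have "g w x = 0" using w by (simp add: g_orth_def)
    ultimately show ?thesis by (simp add: bilinear_rsub[OF bl] bilinear_rmul[OF bl])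
  qed
  then show "w = 0" using assms(3) w by (auto simp: nondegenerate_on_def)
qed

lemma dim_Int_g_orth_anisotropic_vector:
  fixes g :: "'a::euclidean_space \<Rightarrow> 'a \<Rightarrow> real"
  assumes "bilinear g" "subspace E" "x \<in> E" "g x x \<noteq> 0"
  shows "dim (E \<inter> g_orth g {x}) + 1 = dim E"
proof -
  let ?E' = "E \<inter> g_orth g {x}"
  have "linear (\<lambda>y. g y x)" using assms(1) by (simp add: bilinear_def)
  moreover have "E \<inter> {y. g y x = 0} = ?E'" by (auto simp: g_orth_def)
  ultimately have "dim E \<le> dim ?E' + 1"
    using dim_le_dim_Int_kernel_functional[OF _ assms(2)] by metis
  moreover have "dim ?E' \<noteq> dim E"
  proof
    assume "dim ?E' = dim E"
    then have "?E' = E"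
      using assms(1,2) by (intro subspace_dim_equal subspace_inter subspace_g_orth) auto
    then show False using assms(3,4) by (auto simp: g_orth_def)
  qed
  moreover have "dim ?E' \<le> dim E" by (rule dim_subset) blast
  ultimately show ?thesis by linarith
qed

lemma positive_definite_on_span_insert:
  assumes "sym_bilinear g" "subspace P" "positive_definite_on g P" "P \<subseteq> g_orth g {x}" "0 < g x x"
  shows "positive_definite_on g (span (insert x P))"
  unfolding positive_definite_on_def
proof (intro ballI impI)
  have bl: "bilinear g" and sym: "\<And>v w. g v w = g w v"
    using assms(1) by (auto simp: sym_bilinear_def)
  fix u assume u: "u \<in> span (insert x P)" "u \<noteq> 0"
  then obtain k where p: "u - k *\<^sub>R x \<in> P"
    using span_insert[of x P] span_eq_iff[THEN iffD2, OF assms(2)] by auto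
  define p where "p = u - k *\<^sub>R x"
  have "g p x = 0" "g x p = 0" using p assms(4) sym[of x p] by (auto simp: p_def g_orth_def)
  moreover have "u = p + k *\<^sub>R x" by (simp add: p_def)
  ultimately have gu: "g u u = g p p + k * k * g x x"
    by (simp add: bilinear_ladd[OF bl] bilinear_radd[OF bl] bilinear_lmul[OF bl]
        bilinear_rmul[OF bl])
  have "0 \<le> g p p"
    using assms(3) p bilinear_lzero[OF bl]
    by (cases "p = 0") (auto simp: p_def positive_definite_on_def)
  moreover have "0 \<le> k * k * g x x" using assms(5) by simp
  moreover have "0 < k * k * g x x" if "k \<noteq> 0"
    using that assms(5) by (meson mult_pos_pos not_real_square_gt_zero)
  moreover have "0 < g p p" if "p \<noteq> 0"
    using that assms(3) p by (auto simp: p_def positive_definite_on_def)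
  moreover have "p \<noteq> 0 \<or> k \<noteq> 0" using u(2) by (auto simp: p_def)
  ultimately show "0 < g u u" unfolding gu by linarith
qed

lemma positive_definite_extend:
  fixes g :: "'a::euclidean_space \<Rightarrow> 'a \<Rightarrow> real"
  assumes "sym_bilinear g" "subspace E" "x \<in> E" "0 < g x x"
    and "subspace P" "P \<subseteq> E \<inter> g_orth g {x}" "positive_definite_on g P"
  obtains P' where "subspace P'" "P' \<subseteq> E" "positive_definite_on g P'" "dim P' = dim P + 1"
proof
  show "subspace (span (insert x P))" by (rule subspace_span)
  show "span (insert x P) \<subseteq> E" using assms(2,3,6) by (intro span_minimal) auto
  show "positive_definite_on g (span (insert x P))"
    using assms by (intro positive_definite_on_span_insert) auto
  have "x \<notin> P" using assms(4,6) by (auto simp: g_orth_def)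
  then have "x \<notin> span P" using span_eq_iff[THEN iffD2, OF assms(5)] by metis
  then show "dim (span (insert x P)) = dim P + 1" by (simp add: dim_insert)
qed

lemma exists_definite_subspaces:
  fixes g :: "'a::euclidean_space \<Rightarrow> 'a \<Rightarrow> real"
  assumes "sym_bilinear g" "subspace E" "nondegenerate_on g E"
  shows "\<exists>P Q. subspace P \<and> P \<subseteq> E \<and> positive_definite_on g P \<and>
    subspace Q \<and> Q \<subseteq> E \<and> positive_definite_on (\<lambda>x y. - g x y) Q \<and> dim E \<le> dim P + dim Q"
  using assms(2,3)
proof (induction "dim E" arbitrary: E rule: less_induct)
  case less
  have bl: "bilinear g" using assms(1) by (simp add: sym_bilinear_def)
  show ?case
  proof (cases "\<forall>x\<in>E. g x x = 0")
    case True
    then have "E \<subseteq> {0}"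
      using nondegenerate_null_quadratic_form_trivial[OF assms(1) less.prems] by blast
    then show ?thesis
      using subspace_0[OF less.prems(1)] subspace_single_0
      by (intro exI[of _ "{0}"]) (auto simp: positive_definite_on_def)
  next
    case False
    then obtain x where x: "x \<in> E" "g x x \<noteq> 0" by blast
    define E' where "E' = E \<inter> g_orth g {x}"
    have dim_E: "dim E' + 1 = dim E"
      unfolding E'_def by (rule dim_Int_g_orth_anisotropic_vector[OF bl less.prems(1) x])
    have "subspace E'" unfolding E'_def by (intro subspace_inter less.prems(1) subspace_g_orth bl)
    moreover have "nondegenerate_on g E'"
      unfolding E'_def by (rule nondegenerate_on_Int_g_orth_vector[OF assms(1) less.prems x])
    ultimately obtain P Q where PQ: "subspace P" "P \<subseteq> E'" "positive_definite_on g P"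
      "subspace Q" "Q \<subseteq> E'" "positive_definite_on (\<lambda>x y. - g x y) Q" "dim E' \<le> dim P + dim Q"
      using less.hyps[of E'] dim_E by auto
    have "E' \<subseteq> E" by (simp add: E'_def)
    consider "0 < g x x" | "0 < - g x x" using x(2) by linarith
    then show ?thesis
    proof cases
      case 1
      with PQ(1-3) obtain P' where "subspace P'" "P' \<subseteq> E" "positive_definite_on g P'"
        "dim P' = dim P + 1"
        using positive_definite_extend[OF assms(1) less.prems(1) x(1)] unfolding E'_def by metis
      then show ?thesis
        using PQ(4-7) \<open>E' \<subseteq> E\<close> dim_E by (intro exI[of _ P'] exI[of _ Q]) auto
    next
      case 2
      with PQ(4-6) obtain Q' where "subspace Q'" "Q' \<subseteq> E"
        "positive_definite_on (\<lambda>x y. - g x y) Q'" "dim Q' = dim Q + 1"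
        using positive_definite_extend[OF sym_bilinear_uminus[OF assms(1)] less.prems(1) x(1)]
        unfolding E'_def g_orth_uminus by metis
      then show ?thesis
        using PQ(1-3,7) \<open>E' \<subseteq> E\<close> dim_E by (intro exI[of _ P] exI[of _ Q']) auto
    qed
  qed
qed

lemma dim_le_pos_index_add_neg_index:
  fixes g :: "'a::euclidean_space \<Rightarrow> 'a \<Rightarrow> real"
  assumes "sym_bilinear g" "subspace E" "nondegenerate_on g E"
  shows "dim E \<le> pos_index g E + neg_index g E"
proof -
  obtain P Q where PQ: "subspace P" "P \<subseteq> E" "positive_definite_on g P"
    "subspace Q" "Q \<subseteq> E" "positive_definite_on (\<lambda>x y. - g x y) Q" "dim E \<le> dim P + dim Q"
    using exists_definite_subspaces[OF assms] by blast
  have "dim P \<le> pos_index g E" using PQ(1-3) by (rule dim_le_pos_index)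
  moreover have "dim Q \<le> neg_index g E"
    unfolding neg_index_eq_pos_index_uminus using PQ(4-6) by (rule dim_le_pos_index)
  ultimately show ?thesis using PQ(7) by linarith
qed

lemma abs_signature_add_twice_dim_isotropic_le:
  fixes g :: "'a::euclidean_space \<Rightarrow> 'a \<Rightarrow> real"
  assumes "sym_bilinear g" "subspace E" "nondegenerate_on g E"
    and "subspace I" "I \<subseteq> E" "isotropic g I"
  shows "\<bar>signature g E\<bar> + 2 * int (dim I) \<le> int (dim E)"
proof -
  have "dim E \<le> pos_index g E + neg_index g E"
    by (rule dim_le_pos_index_add_neg_index[OF assms(1-3)])
  moreover have "pos_index g E + dim I \<le> dim E"
    by (rule pos_index_add_dim_le[OF assms(2,4,5)]) (use assms(6) in \<open>simp add: isotropic_def\<close>)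
  moreover have "neg_index g E + dim I \<le> dim E"
    unfolding neg_index_eq_pos_index_uminus
    by (rule pos_index_add_dim_le[OF assms(2,4,5)]) (use assms(6) in \<open>simp add: isotropic_def\<close>)
  ultimately show ?thesis unfolding signature_def by linarith
qed

section \<open>Powers of a linear operator\<close>

lemma linear_funpow:
  fixes N :: "'a::real_vector \<Rightarrow> 'a"
  shows "linear N \<Longrightarrow> linear (N ^^ k)"
  by (induction k) (simp_all add: linear_id linear_compose)

lemma subspace_funpow_kernel:
  fixes N :: "'a::real_vector \<Rightarrow> 'a"
  shows "linear N \<Longrightarrow> subspace {x. (N ^^ k) x = 0}"
  by (rule linear_subspace_kernel[OF linear_funpow])

lemma g_symmetric_funpow:
  assumes "g_symmetric g N"
  shows "g_symmetric g (N ^^ k)"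
  unfolding g_symmetric_def
proof (induction k)
  case 0
  then show ?case by simp
next
  case (Suc k)
  show ?case
  proof (intro allI)
    fix v w
    have "g ((N ^^ Suc k) v) w = g ((N ^^ k) v) (N w)"
      using assms by (simp add: g_symmetric_def)
    also have "\<dots> = g v ((N ^^ Suc k) w)" using Suc.IH by (simp add: funpow_swap1)
    finally show "g ((N ^^ Suc k) v) w = g v ((N ^^ Suc k) w)" .
  qed
qed

lemma funpow_kernel_mono:
  fixes N :: "'a::real_vector \<Rightarrow> 'a"
  assumes "linear N" "i \<le> j" "(N ^^ i) x = 0"
  shows "(N ^^ j) x = 0"
proof -
  have "(N ^^ j) x = (N ^^ (j - i)) ((N ^^ i) x)"
    using assms(2) by (metis funpow_add le_add_diff_inverse2 o_apply)
  then show ?thesis using assms(3) linear_0[OF linear_funpow[OF assms(1)]] by simp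
qed

lemma funpow_kernel_stable:
  fixes N :: "'a::zero \<Rightarrow> 'a"
  assumes "\<And>x. (N ^^ Suc i) x = 0 \<Longrightarrow> (N ^^ i) x = 0"
  shows "(N ^^ (i + j)) x = 0 \<Longrightarrow> (N ^^ i) x = 0"
proof (induction j arbitrary: x)
  case 0
  then show ?case by simp
next
  case (Suc j)
  then have "(N ^^ (i + j)) (N x) = 0" by (simp del: funpow.simps add: funpow_Suc_right)
  then have "(N ^^ Suc i) x = 0" using Suc.IH by (simp del: funpow.simps add: funpow_Suc_right)
  then show ?case by (rule assms)
qed

lemma funpow_kernel_growth:
  fixes N :: "'a::euclidean_space \<Rightarrow> 'a"
  assumes "linear N"
  shows "(\<exists>i<j. \<forall>x. (N ^^ Suc i) x = 0 \<longrightarrow> (N ^^ i) x = 0) \<or> j \<le> dim {x. (N ^^ j) x = 0}"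
proof (induction j)
  case 0
  then show ?case by simp
next
  case (Suc j)
  show ?case
  proof (cases "\<forall>x. (N ^^ Suc j) x = 0 \<longrightarrow> (N ^^ j) x = 0")
    case True
    then show ?thesis by blast
  next
    case False
    let ?K = "\<lambda>k. {x. (N ^^ k) x = 0}"
    have sub: "?K j \<subseteq> ?K (Suc j)" using funpow_kernel_mono[OF assms, of j "Suc j"] by auto
    have "\<not> dim (?K (Suc j)) \<le> dim (?K j)"
    proof
      assume "dim (?K (Suc j)) \<le> dim (?K j)"
      then have "?K j = ?K (Suc j)"
        using subspace_dim_equal[OF subspace_funpow_kernel[OF assms]
            subspace_funpow_kernel[OF assms] sub] by blast
      with False show False by blast
    qed
    with Suc.IH show ?thesis by (meson less_SucI not_le order.strict_trans2 Suc_leI)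
  qed
qed

lemma funpow_kernel_stabilizes_at_DIM:
  fixes N :: "'a::euclidean_space \<Rightarrow> 'a"
  assumes "linear N" "(N ^^ (DIM('a) + k)) x = 0"
  shows "(N ^^ DIM('a)) x = 0"
  using funpow_kernel_growth[OF assms(1), of "DIM('a)"]
proof
  assume "\<exists>i<DIM('a). \<forall>x. (N ^^ Suc i) x = 0 \<longrightarrow> (N ^^ i) x = 0"
  then obtain i where i: "i < DIM('a)"
    and stable: "\<And>x. (N ^^ Suc i) x = 0 \<Longrightarrow> (N ^^ i) x = 0" by blast
  have "(N ^^ (i + (DIM('a) + k - i))) x = 0" using assms(2) i by simp
  then have "(N ^^ i) x = 0" using funpow_kernel_stable stable by blast
  then show ?thesis by (rule funpow_kernel_mono[OF assms(1) less_imp_le[OF i]])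
next
  assume "DIM('a) \<le> dim {x. (N ^^ DIM('a)) x = 0}"
  then have "span {x. (N ^^ DIM('a)) x = 0} = UNIV"
    using dim_eq_full dim_subset_UNIV le_antisym by metis
  then have "{x. (N ^^ DIM('a)) x = 0} = UNIV"
    using span_eq_iff[THEN iffD2, OF subspace_funpow_kernel[OF assms(1)]] by (simp only:)
  then show ?thesis by blast
qed

lemma range_plus_kernel_decomposition:
  fixes F :: "'a::euclidean_space \<Rightarrow> 'a"
  assumes "linear F" "\<And>x. F (F x) = 0 \<Longrightarrow> F x = 0"
  obtains u e where "v = F u + e" "F e = 0"
proof -
  let ?R = "range F" and ?K = "{x. F x = 0}"
  let ?S = "{x + y |x y. x \<in> ?R \<and> y \<in> ?K}"
  have sR: "subspace ?R" by (rule linear_subspace_image[OF assms(1) subspace_UNIV])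
  have sK: "subspace ?K" by (rule linear_subspace_kernel[OF assms(1)])
  have "?R \<inter> ?K \<subseteq> {0}" using assms(2) by blast
  then have "dim ?S = dim ?R + dim ?K" by (rule dim_sums_eq_if_Int_zero[OF sR sK])
  moreover have "DIM('a) \<le> dim ?R + dim ?K"
    using dim_le_dim_image_add_dim_kernel[OF assms(1) subspace_UNIV] by simp
  ultimately have "dim ?S = DIM('a)" using dim_subset_UNIV[of ?S] by linarith
  then have "span ?S = UNIV" by (simp only: dim_eq_full)
  moreover have "span ?S = ?S" using subspace_sums[OF sR sK] by (simp add: span_eq_iff)
  ultimately have "v \<in> ?S" by (metis UNIV_I)
  then show ?thesis using that by blast
qed

section \<open>The generalized eigenspace of a g-symmetric operator\<close>

lemma nondegenerate_on_funpow_kernel_DIM: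
  fixes g :: "'a::euclidean_space \<Rightarrow> 'a \<Rightarrow> real"
  assumes "bilinear g" "nondegenerate_on g UNIV" "linear N" "g_symmetric g N"
  shows "nondegenerate_on g {x. (N ^^ DIM('a)) x = 0}"
  unfolding nondegenerate_on_def
proof (intro ballI impI)
  define F where "F = N ^^ DIM('a)"
  fix w assume w: "w \<in> {x. (N ^^ DIM('a)) x = 0}" "\<forall>v\<in>{x. (N ^^ DIM('a)) x = 0}. g w v = 0"
  have "g w v = 0" for v
  proof -
    have "F (F x) = 0 \<Longrightarrow> F x = 0" for x
      unfolding F_def by (rule funpow_kernel_stabilizes_at_DIM[OF assms(3)]) (simp add: funpow_add)
    then obtain u e where v: "v = F u + e" and e: "F e = 0"
      using range_plus_kernel_decomposition[OF linear_funpow[OF assms(3)]] unfolding F_def by metis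
    have "g w (F u) = g (F w) u"
      using g_symmetric_funpow[OF assms(4)] unfolding F_def g_symmetric_def by metis
    also have "\<dots> = 0" using w(1) by (simp add: F_def bilinear_lzero[OF assms(1)])
    finally show ?thesis using w(2) e by (simp add: v F_def bilinear_radd[OF assms(1)])
  qed
  then show "w = 0" using assms(2) by (auto simp: nondegenerate_on_def)
qed

definition invariant_isotropic_subspace ::
    "('a::real_vector \<Rightarrow> 'a \<Rightarrow> real) \<Rightarrow> ('a \<Rightarrow> 'a) \<Rightarrow> 'a set \<Rightarrow> 'a set \<Rightarrow> bool" where
  "invariant_isotropic_subspace g N E I \<longleftrightarrow> subspace I \<and> I \<subseteq> E \<and> N ` I \<subseteq> I \<and> isotropic g I"

lemma maximal_invariant_isotropic_absorbs:
  fixes g :: "'a::euclidean_space \<Rightarrow> 'a \<Rightarrow> real"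
  assumes "sym_bilinear g" "linear N" "subspace E" "invariant_isotropic_subspace g N E I"
    and maximal: "\<And>J. invariant_isotropic_subspace g N E J \<Longrightarrow> dim J \<le> dim I"
    and "w \<in> E \<inter> g_orth g I" "N w \<in> I" "g w w = 0"
  shows "w \<in> I"
proof (rule ccontr)
  assume "w \<notin> I"
  have bl: "bilinear g" and sym: "\<And>v w. g v w = g w v"
    using assms(1) by (auto simp: sym_bilinear_def)
  have I: "subspace I" "I \<subseteq> E" "N ` I \<subseteq> I" "isotropic g I"
    using assms(4) by (auto simp: invariant_isotropic_subspace_def)
  let ?J = "span (insert w I)"
  have "isotropic g (insert w I)"
    using I(4) assms(6,8) sym by (auto simp: isotropic_def g_orth_def)
  then have "isotropic g ?J" by (rule isotropic_span[OF bl])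
  moreover have "N ` ?J \<subseteq> ?J"
  proof -
    have "N ` insert w I \<subseteq> I" using I(3) assms(7) by blast
    then have "span (N ` insert w I) \<subseteq> span I" by (rule span_mono)
    then show ?thesis
      unfolding span_linear_image[OF assms(2), symmetric] using span_mono[of I "insert w I"]
      by blast
  qed
  moreover have "?J \<subseteq> E" using I(2) assms(3,6) by (intro span_minimal) auto
  ultimately have "dim ?J \<le> dim I"
    using maximal[of ?J] subspace_span by (simp add: invariant_isotropic_subspace_def)
  moreover have "w \<notin> span I" using \<open>w \<notin> I\<close> span_eq_iff[THEN iffD2, OF I(1)] by metis
  ultimately show False by (simp add: dim_insert)
qed

lemma maximal_invariant_isotropic_image_g_orth:
  fixes g :: "'a::euclidean_space \<Rightarrow> 'a \<Rightarrow> real"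
  assumes "sym_bilinear g" "linear N" "g_symmetric g N"
    and "subspace E" "N ` E \<subseteq> E" "\<forall>y\<in>E. (N ^^ k) y = 0"
    and "invariant_isotropic_subspace g N E I"
    and maximal: "\<And>J. invariant_isotropic_subspace g N E J \<Longrightarrow> dim J \<le> dim I"
  shows "N ` (E \<inter> g_orth g I) \<subseteq> I"
proof -
  let ?P = "E \<inter> g_orth g I"
  have I: "subspace I" "N ` I \<subseteq> I" using assms(7) by (auto simp: invariant_isotropic_subspace_def)
  have NP: "N y \<in> ?P" if "y \<in> ?P" for y
    using that I(2) assms(3,5) by (auto simp: g_orth_def g_symmetric_def)
  \<comment> \<open>If \<open>N\<^sup>j\<^sup>+\<^sup>1 y \<in> I\<close>, then \<open>N y\<close> is isotropic, orthogonal to \<open>I\<close> and mapped into \<open>I\<close>,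
      so maximality puts it into \<open>I\<close>.\<close>
  have "N y \<in> I" if "y \<in> ?P" "(N ^^ j) y \<in> I" for j y
    using that
  proof (induction j arbitrary: y)
    case 0
    then show ?case using I(2) by auto
  next
    case (Suc j)
    have "N (N y) \<in> I"
      using Suc.IH[OF NP[OF Suc.prems(1)]] Suc.prems(2)
      by (simp add: funpow_Suc_right del: funpow.simps)
    moreover have "g (N y) (N y) = 0"
      using Suc.prems(1) calculation assms(3) by (simp add: g_symmetric_def g_orth_def)
    ultimately show ?case
      using maximal_invariant_isotropic_absorbs[OF assms(1,2,4,7) maximal NP[OF Suc.prems(1)]]
      by blast
  qed
  moreover have "(N ^^ k) y \<in> I" if "y \<in> ?P" for y using that assms(6) I(1) subspace_0 by auto
  ultimately show ?thesis by blast
qed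

lemma exists_isotropic_subspace_funpow_kernel:
  fixes g :: "'a::euclidean_space \<Rightarrow> 'a \<Rightarrow> real"
  assumes "sym_bilinear g" "linear N" "g_symmetric g N"
  obtains I where "subspace I" "I \<subseteq> {x. (N ^^ k) x = 0}" "isotropic g I"
    "dim {x. (N ^^ k) x = 0} \<le> 2 * dim I + dim {x. N x = 0}"
proof -
  define E where "E = {x. (N ^^ k) x = 0}"
  have bl: "bilinear g" using assms(1) by (simp add: sym_bilinear_def)
  have sE: "subspace E" unfolding E_def by (rule subspace_funpow_kernel[OF assms(2)])
  have NE: "N ` E \<subseteq> E" using linear_0[OF assms(2)] by (auto simp: E_def funpow_swap1[symmetric])
  let ?C = "invariant_isotropic_subspace g N E"
  have "?C {0}"
    using sE subspace_0 linear_0[OF assms(2)] bilinear_lzero[OF bl]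
    by (auto simp: invariant_isotropic_subspace_def subspace_single_0 isotropic_def)
  moreover have "\<forall>J. ?C J \<longrightarrow> dim J < DIM('a) + 1"
    using dim_subset_UNIV[where 'a='a] by (simp add: less_Suc_eq_le)
  ultimately have "\<exists>I. ?C I \<and> (\<forall>J. ?C J \<longrightarrow> dim J \<le> dim I)" by (rule ex_has_greatest_nat)
  then obtain I where I: "?C I" and maximal: "\<And>J. ?C J \<Longrightarrow> dim J \<le> dim I" by blast
  define P where "P = E \<inter> g_orth g I"
  have sP: "subspace P" unfolding P_def by (intro subspace_inter sE subspace_g_orth bl)
  have "N ` P \<subseteq> I"
    unfolding P_def
    by (rule maximal_invariant_isotropic_image_g_orth[OF assms sE NE _ I maximal, of k])
      (simp add: E_def)
  then have "dim (N ` P) \<le> dim I" by (rule dim_subset)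
  moreover have "dim E \<le> dim P + dim I" unfolding P_def by (rule dim_le_dim_Int_g_orth[OF bl sE])
  moreover have "dim P \<le> dim (N ` P) + dim (P \<inter> {x. N x = 0})"
    by (rule dim_le_dim_image_add_dim_kernel[OF assms(2) sP])
  moreover have "dim (P \<inter> {x. N x = 0}) \<le> dim {x. N x = 0}" by (rule dim_subset) blast
  ultimately have "dim E \<le> 2 * dim I + dim {x. N x = 0}" by linarith
  then show ?thesis using that I unfolding E_def invariant_isotropic_subspace_def by blast
qed

lemma nondegenerate_kernel_imp_funpow_kernel_subset:
  assumes "bilinear g" "linear N" "g_symmetric g N" "nondegenerate_on g {x. N x = 0}"
  shows "(N ^^ k) x = 0 \<Longrightarrow> N x = 0"
proof (induction k arbitrary: x)
  case 0
  then show ?case using linear_0[OF assms(2)] by simp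
next
  case (Suc k)
  then have "N (N x) = 0"
    using Suc.IH[of "N x"] by (simp add: funpow_Suc_right del: funpow.simps)
  moreover have "g (N x) z = 0" if "N z = 0" for z
    using assms(1,3) that by (simp add: g_symmetric_def bilinear_rzero)
  ultimately show ?case using assms(4) by (auto simp: nondegenerate_on_def)
qed

lemma nondegenerate_on_kernel_iff_dim_eq:
  fixes g :: "'a::euclidean_space \<Rightarrow> 'a \<Rightarrow> real"
  assumes "bilinear g" "linear N" "g_symmetric g N"
    and "0 < k" "nondegenerate_on g {x. (N ^^ k) x = 0}"
  shows "nondegenerate_on g {x. N x = 0} \<longleftrightarrow> dim {x. (N ^^ k) x = 0} = dim {x. N x = 0}"
proof -
  let ?E = "{x. (N ^^ k) x = 0}" and ?K = "{x. N x = 0}"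
  have KE: "?K \<subseteq> ?E" using funpow_kernel_mono[OF assms(2), of 1 k] assms(4) by auto
  have "?E = ?K \<longleftrightarrow> dim ?E = dim ?K"
    using subspace_dim_equal[OF linear_subspace_kernel[OF assms(2)]
        subspace_funpow_kernel[OF assms(2)] KE] by auto
  moreover have "nondegenerate_on g ?K \<longleftrightarrow> ?E = ?K"
  proof
    assume "nondegenerate_on g ?K"
    then show "?E = ?K" using KE nondegenerate_kernel_imp_funpow_kernel_subset[OF assms(1-3)]
      by blast
  qed (use assms(5) in simp)
  ultimately show ?thesis by simp
qed

theorem corollary2p6:
  fixes g :: "real^'n \<Rightarrow> real^'n \<Rightarrow> real"
    and A :: "real^'n \<Rightarrow> real^'n"
    and lam :: real
  assumes "sym_bilinear g"
    and "nondegenerate_on g UNIV"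
    and "linear A"
    and "g_symmetric g A"
    and "\<exists>v. v \<noteq> 0 \<and> A v = lam *\<^sub>R v"
  shows "\<bar>signature g (gen_kernel A lam CARD('n))\<bar> \<le> int (dim (gen_kernel A lam 1))
         \<and> (nondegenerate_on g (gen_kernel A lam 1) \<longleftrightarrow>
           dim (gen_kernel A lam CARD('n)) = dim (gen_kernel A lam 1))"
proof -
  define N where "N = (\<lambda>x. A x - lam *\<^sub>R x)"
  have bl: "bilinear g" using assms(1) by (simp add: sym_bilinear_def)
  have lin: "linear N"
    unfolding N_def
    by (rule linearI)
      (simp_all add: linear_add[OF assms(3)] linear_scale[OF assms(3)] algebra_simps)
  have sym: "g_symmetric g N"
    using assms(4) unfolding N_def g_symmetric_def
    by (simp add: bilinear_lsub[OF bl] bilinear_rsub[OF bl] bilinear_lmul[OF bl]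
        bilinear_rmul[OF bl])
  have kernel: "gen_kernel A lam k = {x. (N ^^ k) x = 0}" for k by (simp add: gen_kernel_def N_def)
  let ?E = "{x. (N ^^ DIM(real^'n)) x = 0}" and ?K = "{x. N x = 0}"
  have ndE: "nondegenerate_on g ?E"
    by (rule nondegenerate_on_funpow_kernel_DIM[OF bl assms(2) lin sym])
  obtain I where I: "subspace I" "I \<subseteq> ?E" "isotropic g I" "dim ?E \<le> 2 * dim I + dim ?K"
    using exists_isotropic_subspace_funpow_kernel[OF assms(1) lin sym] .
  have "\<bar>signature g ?E\<bar> + 2 * int (dim I) \<le> int (dim ?E)"
    using abs_signature_add_twice_dim_isotropic_le[OF assms(1) subspace_funpow_kernel[OF lin] ndE]
      I(1-3) .
  with I(4) have "\<bar>signature g ?E\<bar> \<le> int (dim ?K)" by linarith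
  moreover have "nondegenerate_on g ?K \<longleftrightarrow> dim ?E = dim ?K"
    by (rule nondegenerate_on_kernel_iff_dim_eq[OF bl lin sym DIM_positive ndE])
  ultimately show ?thesis by (simp add: kernel)
qed

end
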